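(* Let $U$ be an intersecting family of polynomials over $\mathbb{F}_q$ of degree at most $2$. Let $c\in\mathbb{F}_q$ and $\alpha,\beta\in\mathbb{F}_q$, and suppose that $U$ contains more than $\lfloor (q+1)/2\rfloor$ polynomials $h_i$ whose coefficient of $x^2$ equals $c$ and which satisfy $h_i(\alpha)=\beta$. Then every polynomial $f\in U$ whose coefficient of $x^2$ is not $c$ satisfies $f(\alpha)=\beta$.
   Context: A set of polynomials over $\mathbb{F}_q$ is intersecting if for any two members $f_1,f_2$ the graphs $\{(x,f_i(x)):x\in\mathbb{F}_q\}$ share at least one point. *)

theory Defs
  imports "HOL-Computational_Algebra.Polynomial"
begin

definition intersecting :: "'a::{finite,field} poly set \<Rightarrow> bool" where
  "intersecting U \<longleftrightarrow> (\<forall>f1\<in>U. \<forall>f2\<in>U. \<exists>x. poly f1 x = poly f2 x)"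

end

theory Submission
  imports Defs "HOL-Library.Disjoint_Sets"
begin

(*
  Suppose f \<in> U has x^2-coefficient different from c and f(\<alpha>) \<noteq> \<beta>, and let H be the set of
  the given polynomials h.  Every f - h is a genuine quadratic with the same leading coefficient a
  and the same nonzero value d at \<alpha>; it has a root since U is intersecting.  Its roots avoid \<alpha>,
  and different h give disjoint root sets: two members of H share their x^2-coefficient and their
  value at \<alpha>, so they coincide as soon as they agree at a second point.  A quadratic with a
  single root r is a (x - r)^2, and a (\<alpha> - r)^2 = d leaves at most two such r; all other f - h
  have two roots.  Counting roots in F_q - {\<alpha>} gives 2 |H| - 2 \<le> q - 1.
*)

lemma card_square_roots_le_2: "card {x :: 'a::idom. x\<^sup>2 = e} \<le> 2"
proof (cases "\<exists>s. s\<^sup>2 = e")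
  case True
  then obtain s where "s\<^sup>2 = e" by blast
  then have "{x. x\<^sup>2 = e} = {s, -s}" by (auto simp: power2_eq_iff)
  then show ?thesis by (simp add: card_insert_le_m1)
qed simp

lemma degree_2_single_root_eq_square:
  fixes p :: "'a::field poly"
  assumes "degree p = 2" and roots: "{x. poly p x = 0} = {r}"
  shows "p = smult (lead_coeff p) ([:-r, 1:]\<^sup>2)"
proof -
  obtain a b c where p: "p = [:c, b, a:]" and "a \<noteq> 0"
    using assms(1) by (rule degree2_coeffs)
  have root: "c + b * r + a * r\<^sup>2 = 0"
    using roots by (auto simp: p power2_eq_square algebra_simps)
  \<comment> \<open>the roots of p are symmetric about -b/(2a)\<close>
  have "poly p (- b / a - r) = poly p r"
    using \<open>a \<noteq> 0\<close> by (simp add: p field_simps power2_eq_square)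
  also have "poly p r = 0" using roots by blast
  finally have "- b / a - r \<in> {x. poly p x = 0}" by simp
  then have "- b / a - r = r" using roots by blast
  then have "- b = 2 * a * r" using \<open>a \<noteq> 0\<close> by (simp add: field_simps)
  then have b: "b = - 2 * a * r" by (metis minus_minus mult_minus_left)
  with root have c: "c = a * r\<^sup>2" by (simp add: power2_eq_square algebra_simps)
  show ?thesis by (simp add: p b c power2_eq_square)
qed

lemma double_root_quadratics_subset:
  fixes a \<alpha> d :: "'a::field"
  shows "{p. degree p = 2 \<and> lead_coeff p = a \<and> poly p \<alpha> = d \<and> (\<exists>r. {x. poly p x = 0} = {r})}
    \<subseteq> (\<lambda>y. smult a ([:y - \<alpha>, 1:]\<^sup>2)) ` {y. y\<^sup>2 = d / a}"
proof
  fix p assume "p \<in> {p. degree p = 2 \<and> lead_coeff p = a \<and> poly p \<alpha> = d \<and> (\<exists>r. {x. poly p x = 0} = {r})}"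
  then obtain r where deg: "degree p = 2" and lead: "lead_coeff p = a" and val: "poly p \<alpha> = d"
    and roots: "{x. poly p x = 0} = {r}" by blast
  have "a \<noteq> 0" using deg lead by (metis degree_0 leading_coeff_0_iff zero_neq_numeral)
  have p: "p = smult a ([:-r, 1:]\<^sup>2)"
    using degree_2_single_root_eq_square[OF deg roots] lead by simp
  then have "a * (\<alpha> - r)\<^sup>2 = d" using val by (simp add: power2_eq_square algebra_simps)
  then have "(\<alpha> - r)\<^sup>2 = d / a" using \<open>a \<noteq> 0\<close> by (simp add: field_simps)
  moreover have "p = smult a ([:(\<alpha> - r) - \<alpha>, 1:]\<^sup>2)" using p by simp
  ultimately show "p \<in> (\<lambda>y. smult a ([:y - \<alpha>, 1:]\<^sup>2)) ` {y. y\<^sup>2 = d / a}" by blast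
qed

lemma card_quadratics_with_disjoint_roots:
  fixes G :: "'a::{finite,field} poly set" and a \<alpha> d :: 'a
  assumes deg: "\<And>g. g \<in> G \<Longrightarrow> degree g = 2" and lead: "\<And>g. g \<in> G \<Longrightarrow> lead_coeff g = a"
    and val: "\<And>g. g \<in> G \<Longrightarrow> poly g \<alpha> = d" and "d \<noteq> 0"
    and root: "\<And>g. g \<in> G \<Longrightarrow> \<exists>x. poly g x = 0"
    and disj: "disjoint_family_on (\<lambda>g. {x. poly g x = 0}) G"
  shows "2 * card G \<le> card (UNIV :: 'a set) + 1"
proof (cases "finite G")
  case True
  define Z where "Z g = {x. poly g x = 0}" for g :: "'a poly"
  define D where "D = {g \<in> G. \<exists>r. Z g = {r}}"
  have D_subset: "D \<subseteq> (\<lambda>y. smult a ([:y - \<alpha>, 1:]\<^sup>2)) ` {y. y\<^sup>2 = d / a}"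
    using double_root_quadratics_subset[of a \<alpha> d] deg lead val by (auto simp: D_def Z_def)
  have "card D \<le> card {y :: 'a. y\<^sup>2 = d / a}"
    using card_mono[OF finite_imageI[OF finite] D_subset] card_image_le[OF finite] by (rule order_trans)
  then have card_D: "card D \<le> 2" using card_square_roots_le_2 by (rule order_trans)
  have two_le: "2 \<le> card (Z g) + of_bool (g \<in> D)" if g: "g \<in> G" for g
  proof (cases "g \<in> D")
    case False
    obtain r where "r \<in> Z g" using root[OF g] by (auto simp: Z_def)
    moreover have "Z g \<noteq> {r}" using False g by (auto simp: D_def)
    ultimately obtain s where "s \<in> Z g" "s \<noteq> r" by blast
    then have "card {r, s} \<le> card (Z g)" using \<open>r \<in> Z g\<close> by (intro card_mono) auto
    then show ?thesis using False \<open>s \<noteq> r\<close> by simp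
  qed (use root in \<open>auto simp: D_def Z_def\<close>)
  have "2 * card G = (\<Sum>g\<in>G. 2)" by simp
  also have "\<dots> \<le> (\<Sum>g\<in>G. card (Z g) + of_bool (g \<in> D))"
    using two_le by (rule sum_mono)
  also have "\<dots> = (\<Sum>g\<in>G. card (Z g)) + card D"
    using True by (simp add: sum.distrib D_def Collect_conj_eq)
  also have "(\<Sum>g\<in>G. card (Z g)) = card (\<Union>g\<in>G. Z g)"
    using disj True by (simp add: card_UN_disjoint' Z_def)
  also have "\<dots> \<le> card (UNIV - {\<alpha>})"
    using val \<open>d \<noteq> 0\<close> by (intro card_mono) (auto simp: Z_def)
  finally show ?thesis using card_D card_gt_0_iff[of "UNIV :: 'a set"] by (simp add: card_Diff_singleton)
qed simp

lemma disjoint_roots_of_differences: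
  fixes f :: "'a::field poly" and H :: "'a poly set"
  assumes H: "\<And>h. h \<in> H \<Longrightarrow> degree h \<le> 2 \<and> coeff h 2 = c \<and> poly h \<alpha> = \<beta>"
    and "poly f \<alpha> \<noteq> \<beta>"
  shows "disjoint_family_on (\<lambda>g. {x. poly g x = 0}) ((\<lambda>h. f - h) ` H)"
  unfolding disjoint_family_on_def
proof (intro ballI impI equals0I)
  fix g1 g2 x
  assume "g1 \<in> (\<lambda>h. f - h) ` H" "g2 \<in> (\<lambda>h. f - h) ` H" "g1 \<noteq> g2"
    and "x \<in> {x. poly g1 x = 0} \<inter> {x. poly g2 x = 0}"
  then obtain h1 h2 where h: "h1 \<in> H" "h2 \<in> H" "h1 \<noteq> h2"
    and x: "poly h1 x = poly f x" "poly h2 x = poly f x" by auto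
  then have "x \<noteq> \<alpha>" using assms by auto
  have "h1 = h2"
    by (rule poly_eqI_degree_lead_coeff[where n = 2 and A = "{\<alpha>, x}"])
      (use H h x \<open>x \<noteq> \<alpha>\<close> in auto)
  with \<open>h1 \<noteq> h2\<close> show False ..
qed

theorem lemma5:
  fixes U :: "'a::{finite,field} poly set" and c \<alpha> \<beta> :: 'a
  assumes "intersecting U"
    and "\<forall>f\<in>U. degree f \<le> 2"
    and "card {h \<in> U. coeff h 2 = c \<and> poly h \<alpha> = \<beta>} > (card (UNIV :: 'a set) + 1) div 2"
  shows "\<forall>f\<in>U. coeff f 2 \<noteq> c \<longrightarrow> poly f \<alpha> = \<beta>"
proof (intro ballI impI, rule ccontr)
  fix f assume "f \<in> U" and "coeff f 2 \<noteq> c" and "poly f \<alpha> \<noteq> \<beta>"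
  define H where "H = {h \<in> U. coeff h 2 = c \<and> poly h \<alpha> = \<beta>}"
  have H: "degree h \<le> 2 \<and> coeff h 2 = c \<and> poly h \<alpha> = \<beta>" if "h \<in> H" for h
    using that assms(2) by (auto simp: H_def)
  have "2 * card ((\<lambda>h. f - h) ` H) \<le> card (UNIV :: 'a set) + 1"
  proof (rule card_quadratics_with_disjoint_roots)
    fix g assume "g \<in> (\<lambda>h. f - h) ` H"
    then obtain h where "h \<in> H" and g: "g = f - h" by blast
    have "degree g \<le> 2" using H[OF \<open>h \<in> H\<close>] assms(2) \<open>f \<in> U\<close>
      by (simp add: g degree_diff_le)
    moreover have "coeff g 2 \<noteq> 0" using H[OF \<open>h \<in> H\<close>] \<open>coeff f 2 \<noteq> c\<close> by (simp add: g)
    ultimately show "degree g = 2" by (simp add: antisym le_degree)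
    then show "lead_coeff g = coeff f 2 - c" using H[OF \<open>h \<in> H\<close>] by (simp add: g)
    show "poly g \<alpha> = poly f \<alpha> - \<beta>" using H[OF \<open>h \<in> H\<close>] by (simp add: g)
    show "\<exists>x. poly g x = 0"
      using assms(1) \<open>f \<in> U\<close> \<open>h \<in> H\<close> by (auto simp: g intersecting_def H_def)
  next
    show "poly f \<alpha> - \<beta> \<noteq> 0" using \<open>poly f \<alpha> \<noteq> \<beta>\<close> by simp
    show "disjoint_family_on (\<lambda>g. {x. poly g x = 0}) ((\<lambda>h. f - h) ` H)"
      using H \<open>poly f \<alpha> \<noteq> \<beta>\<close> by (rule disjoint_roots_of_differences)
  qed
  moreover have "card ((\<lambda>h. f - h) ` H) = card H" by (intro card_image inj_onI) auto
  ultimately show False using assms(3) by (simp add: H_def)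
qed

end
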